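(* Let $\bm X$ have standard exponential margins and follow a block geometric extremal graphical model relative to a block graph $\mathcal G=(V,E)$ with gauge $g$. For distinct $i,j\in V$, let $i=v_0,v_1,\dots,v_m=j$ be the vertices of the unique shortest path from $i$ to $j$. Then $$g_{\{i,j\}}(x_i,x_j)=\min_{x_{v_1},\dots,x_{v_{m-1}}\ge0}\Big\{\sum_{k=1}^{m}g_{\{v_{k-1},v_k\}}(x_{v_{k-1}},x_{v_k})-\sum_{k=1}^{m-1}x_{v_k}\Big\},$$ i.e. $g_{\{i,j\}}$ is the bivariate marginal of the chain geometric extremal graphical model on the path vertices $v_0,\dots,v_m$ with bivariate gauges $g_{\{v_{k-1},v_k\}}$.
   Context: $\bm X=(X_k:k\in V)$ has a Lebesgue density $f$ and continuous gauge $g:[0,\infty)^d\to[0,\infty)$ with $-\log f(t\bm x_t)/t\to g(\bm x)$ whenever $\bm x_t\to\bm x\in[0,\infty)^d$; marginal gauges $g_J(\bm x_J)=\min_{x_k\ge0,\,k\notin J}g(\bm x)$, which satisfy $g_J\ge\max_{j\in J}x_j$. Block graph: connected decomposable graph with cliques $C_1,\dots,C_N$ ordered by the running intersection property, whose separators $D_k=C_k\cap\bigcup_{l<k}C_l$ are single vertices; the path vertices $v_1,\dots,v_{m-1}$ are separators. Block geometric extremal graphical model: $g(\bm x)=\sum_k g_{C_k}(\bm x_{C_k})-\sum_{k=2}^Nx_{D_k}$. *)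

theory Defs
  imports "HOL-Probability.Probability"
begin

definition is_clique :: "('v \<Rightarrow> 'v \<Rightarrow> bool) \<Rightarrow> 'v set \<Rightarrow> bool" where
  "is_clique E C \<longleftrightarrow> (\<forall>a\<in>C. \<forall>b\<in>C. a \<noteq> b \<longrightarrow> E a b)"

definition maximal_clique :: "('v \<Rightarrow> 'v \<Rightarrow> bool) \<Rightarrow> 'v set \<Rightarrow> bool" where
  "maximal_clique E C \<longleftrightarrow> is_clique E C \<and> (\<forall>C'. is_clique E C' \<and> C \<subseteq> C' \<longrightarrow> C' = C)"

definition separator :: "'v set list \<Rightarrow> nat \<Rightarrow> 'v set" where
  "separator Cs k = Cs ! k \<inter> (\<Union>l<k. Cs ! l)"

(* Block graph: the list Cs enumerates (without repetition) exactly the maximal cliques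
   of the graph, in an order in which every separator D_k (k \<ge> 2, i.e. 0-based k \<ge> 1)
   is a single vertex.  This is a running-intersection (perfect) ordering, so the graph is
   decomposable, and it is connected since all separators are nonempty. *)
definition block_graph :: "('v \<Rightarrow> 'v \<Rightarrow> bool) \<Rightarrow> 'v set list \<Rightarrow> bool" where
  "block_graph E Cs \<longleftrightarrow>
     (\<forall>a b. E a b \<longrightarrow> E b a) \<and> (\<forall>a. \<not> E a a) \<and>
     distinct Cs \<and> set Cs = {C. maximal_clique E C} \<and>
     (\<forall>k. 1 \<le> k \<and> k < length Cs \<longrightarrow> (\<exists>v. separator Cs k = {v}))"

definition is_walk :: "('v \<Rightarrow> 'v \<Rightarrow> bool) \<Rightarrow> 'v list \<Rightarrow> 'v \<Rightarrow> 'v \<Rightarrow> bool" where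
  "is_walk E ps i j \<longleftrightarrow> ps \<noteq> [] \<and> hd ps = i \<and> last ps = j \<and>
     (\<forall>k. Suc k < length ps \<longrightarrow> E (ps ! k) (ps ! Suc k))"

definition is_shortest_path :: "('v \<Rightarrow> 'v \<Rightarrow> bool) \<Rightarrow> 'v list \<Rightarrow> 'v \<Rightarrow> 'v \<Rightarrow> bool" where
  "is_shortest_path E ps i j \<longleftrightarrow> is_walk E ps i j \<and>
     (\<forall>qs. is_walk E qs i j \<longrightarrow> length ps \<le> length qs)"

definition nonneg_orthant :: "(real ^ 'v) set" where
  "nonneg_orthant = {x. \<forall>k. 0 \<le> x $ k}"

(* marginal gauge g_J(x_J) = min over x_k \<ge> 0 (k \<notin> J) of g(x); represented as a
   function of the full vector that depends only on the coordinates in J *)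
definition marg_gauge :: "(real ^ 'v \<Rightarrow> real) \<Rightarrow> 'v set \<Rightarrow> real ^ 'v \<Rightarrow> real" where
  "marg_gauge g J x = (INF y \<in> {y. (\<forall>j\<in>J. y $ j = x $ j) \<and> (\<forall>k. k \<notin> J \<longrightarrow> 0 \<le> y $ k)}. g y)"

definition is_gauge :: "(real ^ 'v \<Rightarrow> real) \<Rightarrow> (real ^ 'v \<Rightarrow> real) \<Rightarrow> bool" where
  "is_gauge f g \<longleftrightarrow>
     continuous_on nonneg_orthant g \<and> (\<forall>x\<in>nonneg_orthant. 0 \<le> g x) \<and>
     (\<forall>x\<in>nonneg_orthant. \<forall>xt :: real \<Rightarrow> real ^ 'v.
        (\<forall>t. xt t \<in> nonneg_orthant) \<longrightarrow> (xt \<longlongrightarrow> x) at_top \<longrightarrow>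
        ((\<forall>\<^sub>F t in at_top. 0 < f (t *\<^sub>R xt t)) \<and>
         ((\<lambda>t. - ln (f (t *\<^sub>R xt t)) / t) \<longlongrightarrow> g x) at_top))"

definition block_geometric_model ::
    "('v \<Rightarrow> 'v \<Rightarrow> bool) \<Rightarrow> 'v set list \<Rightarrow> (real ^ 'v \<Rightarrow> real) \<Rightarrow> bool" where
  "block_geometric_model E Cs g \<longleftrightarrow> block_graph E Cs \<and>
     (\<forall>x\<in>nonneg_orthant.
        g x = (\<Sum>k<length Cs. marg_gauge g (Cs ! k) x)
              - (\<Sum>k\<in>{1..<length Cs}. \<Sum>v\<in>separator Cs k. x $ v))"

end

theory Submission
  imports Defs
begin

text \<open>Write the gauge as \<open>g = \<Sum>\<^sub>k g\<^sub>C\<^sub>k - \<Sum>\<^sub>k x\<^sub>s\<^sub>k\<close> and add the cliques one at a time in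
  running-intersection order. The partial sum over the first \<open>n\<close> cliques depends only on their
  vertices, and the next clique meets them in the single separator \<open>s\<^sub>n\<close>; hence a marginal of the
  next partial sum is obtained by minimising over the old and the new vertices separately and then
  over \<open>x\<^sub>s\<^sub>n\<close>. A shortest path from a new vertex to an old one enters through \<open>s\<^sub>n\<close>, so induction
  on \<open>n\<close> yields the chain formula. The induction also needs \<open>g\<^sub>{\<^sub>s\<^sub>} (x) = x\<^sub>s\<close> at every separator,
  which follows from the factorisation and from \<open>g (x) \<ge> x\<^sub>v\<close>, the latter being forced by the
  standard exponential margins.\<close>

section \<open>Minimisation over the nonnegative orthant\<close>

lemma mem_nonneg_orthant [simp]: "z \<in> nonneg_orthant \<longleftrightarrow> (\<forall>k. 0 \<le> z $ k)"
  by (simp add: nonneg_orthant_def)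

definition depends_only_on :: "(real ^ 'v \<Rightarrow> real) \<Rightarrow> 'v set \<Rightarrow> bool" where
  "depends_only_on F K \<longleftrightarrow> (\<forall>y z. (\<forall>v\<in>K. y $ v = z $ v) \<longrightarrow> F y = F z)"

lemma depends_only_onD: "depends_only_on F K \<Longrightarrow> (\<And>v. v \<in> K \<Longrightarrow> y $ v = z $ v) \<Longrightarrow> F y = F z"
  unfolding depends_only_on_def by blast

lemma depends_only_on_mono: "depends_only_on F K \<Longrightarrow> K \<subseteq> L \<Longrightarrow> depends_only_on F L"
  unfolding depends_only_on_def by blast

lemma depends_only_on_marg_gauge:
  fixes F :: "real ^ 'v \<Rightarrow> real"
  shows "depends_only_on (marg_gauge F J) J"
  unfolding depends_only_on_def
proof (intro allI impI)
  fix y z :: "real ^ 'v" assume "\<forall>v\<in>J. y $ v = z $ v"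
  then have "{x. (\<forall>v\<in>J. x $ v = y $ v) \<and> (\<forall>v. v \<notin> J \<longrightarrow> 0 \<le> x $ v)} =
             {x. (\<forall>v\<in>J. x $ v = z $ v) \<and> (\<forall>v. v \<notin> J \<longrightarrow> 0 \<le> x $ v)}" by auto
  then show "marg_gauge F J y = marg_gauge F J z" unfolding marg_gauge_def by simp
qed

definition orthant_fibre :: "'v set \<Rightarrow> real ^ 'v \<Rightarrow> (real ^ 'v) set" where
  "orthant_fibre J y = {z \<in> nonneg_orthant. \<forall>v\<in>J. z $ v = y $ v}"

lemma self_in_orthant_fibre: "y \<in> nonneg_orthant \<Longrightarrow> y \<in> orthant_fibre J y"
  by (simp add: orthant_fibre_def)

lemma orthant_fibre_nonneg: "z \<in> orthant_fibre J y \<Longrightarrow> z \<in> nonneg_orthant"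
  by (simp add: orthant_fibre_def)

lemma bdd_below_orthantE:
  assumes "bdd_below (F ` nonneg_orthant)"
  obtains c where "\<And>z. z \<in> nonneg_orthant \<Longrightarrow> c \<le> F z"
  using assms unfolding bdd_below_def by (auto simp del: mem_nonneg_orthant)

lemma bdd_below_orthant_fibre:
  "bdd_below (F ` nonneg_orthant) \<Longrightarrow> bdd_below (F ` orthant_fibre J y)"
  by (rule bdd_below_mono) (auto simp: orthant_fibre_def)

lemma marg_gauge_eq_INF:
  assumes "y \<in> nonneg_orthant"
  shows "marg_gauge F J y = (INF z \<in> orthant_fibre J y. F z)"
proof -
  have "{z. (\<forall>v\<in>J. z $ v = y $ v) \<and> (\<forall>v. v \<notin> J \<longrightarrow> 0 \<le> z $ v)} = orthant_fibre J y"
  proof (intro set_eqI iffI)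
    fix z assume z: "z \<in> {z. (\<forall>v\<in>J. z $ v = y $ v) \<and> (\<forall>v. v \<notin> J \<longrightarrow> 0 \<le> z $ v)}"
    have "0 \<le> z $ v" for v
      using z assms by (cases "v \<in> J") auto
    with z show "z \<in> orthant_fibre J y" by (simp add: orthant_fibre_def)
  qed (auto simp: orthant_fibre_def)
  then show ?thesis by (simp add: marg_gauge_def)
qed

lemma marg_gauge_le:
  "bdd_below (F ` nonneg_orthant) \<Longrightarrow> y \<in> nonneg_orthant \<Longrightarrow> z \<in> orthant_fibre J y \<Longrightarrow>
    marg_gauge F J y \<le> F z"
  by (simp add: marg_gauge_eq_INF cINF_lower bdd_below_orthant_fibre)

lemma marg_gauge_greatest:
  assumes "y \<in> nonneg_orthant" and "\<And>z. z \<in> orthant_fibre J y \<Longrightarrow> c \<le> F z"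
  shows "c \<le> marg_gauge F J y"
  unfolding marg_gauge_eq_INF[OF assms(1)]
proof (rule cINF_greatest)
  show "orthant_fibre J y \<noteq> {}" using self_in_orthant_fibre[OF assms(1)] by blast
qed (rule assms(2))

lemma marg_gauge_lower_bound:
  "(\<And>z. z \<in> nonneg_orthant \<Longrightarrow> c \<le> F z) \<Longrightarrow> y \<in> nonneg_orthant \<Longrightarrow> c \<le> marg_gauge F J y"
  by (rule marg_gauge_greatest) (auto simp: orthant_fibre_def)

lemma bdd_below_marg_gauge:
  assumes "bdd_below (F ` nonneg_orthant)"
  shows "bdd_below (marg_gauge F J ` nonneg_orthant)"
proof -
  obtain c where "\<And>z. z \<in> nonneg_orthant \<Longrightarrow> c \<le> F z"
    using assms by (elim bdd_below_orthantE) blast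
  then show ?thesis by (intro bdd_belowI2) (rule marg_gauge_lower_bound)
qed

lemma marg_gauge_ge_coord:
  assumes "\<And>z. z \<in> nonneg_orthant \<Longrightarrow> z $ v \<le> F z" and "v \<in> J" and "y \<in> nonneg_orthant"
  shows "y $ v \<le> marg_gauge F J y"
proof (rule marg_gauge_greatest[OF assms(3)])
  fix z assume "z \<in> orthant_fibre J y"
  then have "z \<in> nonneg_orthant" and "z $ v = y $ v" using assms(2) by (auto simp: orthant_fibre_def)
  then show "y $ v \<le> F z" using assms(1) by metis
qed

lemma marg_gauge_cong:
  "y \<in> nonneg_orthant \<Longrightarrow> (\<And>z. z \<in> nonneg_orthant \<Longrightarrow> F z = G z) \<Longrightarrow>
    marg_gauge F J y = marg_gauge G J y"
  by (simp add: marg_gauge_eq_INF orthant_fibre_def)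

lemma marg_gauge_mono:
  assumes "bdd_below (F ` nonneg_orthant)" and "y \<in> nonneg_orthant"
    and "\<And>z. z \<in> nonneg_orthant \<Longrightarrow> F z \<le> G z"
  shows "marg_gauge F J y \<le> marg_gauge G J y"
proof (rule marg_gauge_greatest[OF assms(2)])
  fix z assume "z \<in> orthant_fibre J y"
  then have "marg_gauge F J y \<le> F z" and "F z \<le> G z"
    using assms(3)[OF orthant_fibre_nonneg] by (auto intro: marg_gauge_le[OF assms(1,2)])
  then show "marg_gauge F J y \<le> G z" by (rule order_trans)
qed

lemma marg_gauge_subset_mono:
  assumes "bdd_below (F ` nonneg_orthant)" and "y \<in> nonneg_orthant" and "J \<subseteq> K"
  shows "marg_gauge F J y \<le> marg_gauge F K y"
proof (rule marg_gauge_greatest[OF assms(2)])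
  fix z assume "z \<in> orthant_fibre K y"
  then have "z \<in> orthant_fibre J y" using assms(3) by (auto simp: orthant_fibre_def)
  then show "marg_gauge F J y \<le> F z" by (rule marg_gauge_le[OF assms(1,2)])
qed

lemma marg_gauge_marg_gauge:
  assumes "bdd_below (F ` nonneg_orthant)" and "y \<in> nonneg_orthant"
  shows "marg_gauge (marg_gauge F K) J y = marg_gauge F (J \<inter> K) y"
proof (rule antisym)
  show "marg_gauge (marg_gauge F K) J y \<le> marg_gauge F (J \<inter> K) y"
  proof (rule marg_gauge_greatest[OF assms(2)])
    fix w assume w: "w \<in> orthant_fibre (J \<inter> K) y"
    define z where "z = (\<chi> v. if v \<in> J then y $ v else w $ v)"
    have z: "z \<in> orthant_fibre J y" and "w \<in> orthant_fibre K z"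
      using w assms(2) by (auto simp: orthant_fibre_def z_def)
    have "marg_gauge (marg_gauge F K) J y \<le> marg_gauge F K z"
      by (rule marg_gauge_le[OF bdd_below_marg_gauge[OF assms(1)] assms(2) z])
    also have "\<dots> \<le> F w"
      by (rule marg_gauge_le[OF assms(1) orthant_fibre_nonneg[OF z]]) fact
    finally show "marg_gauge (marg_gauge F K) J y \<le> F w" .
  qed
  show "marg_gauge F (J \<inter> K) y \<le> marg_gauge (marg_gauge F K) J y"
  proof (rule marg_gauge_greatest[OF assms(2)])
    fix z assume z: "z \<in> orthant_fibre J y"
    then show "marg_gauge F (J \<inter> K) y \<le> marg_gauge F K z"
    proof (intro marg_gauge_greatest orthant_fibre_nonneg)
      fix w assume "w \<in> orthant_fibre K z"
      then have "w \<in> orthant_fibre (J \<inter> K) y" using z by (auto simp: orthant_fibre_def)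
      then show "marg_gauge F (J \<inter> K) y \<le> F w" by (rule marg_gauge_le[OF assms])
    qed
  qed
qed

lemma marg_gauge_add_dependent:
  assumes "bdd_below (B ` nonneg_orthant)" and "y \<in> nonneg_orthant" and "depends_only_on A J"
  shows "marg_gauge (\<lambda>z. A z + B z) J y = A y + marg_gauge B J y"
proof -
  have "marg_gauge (\<lambda>z. A z + B z) J y = (INF z \<in> orthant_fibre J y. A y + B z)"
    unfolding marg_gauge_eq_INF[OF assms(2)]
    by (intro INF_cong refl) (auto simp: orthant_fibre_def intro: depends_only_onD[OF assms(3)])
  also have "\<dots> = A y + marg_gauge B J y"
    unfolding marg_gauge_eq_INF[OF assms(2)]
    by (intro Inf_add_eq bdd_below_orthant_fibre assms(1)) (use self_in_orthant_fibre[OF assms(2)] in blast)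
  finally show ?thesis .
qed

lemma marg_gauge_diff_coord:
  assumes "bdd_below (F ` nonneg_orthant)" and "y \<in> nonneg_orthant" and "u \<in> J"
  shows "marg_gauge (\<lambda>z. F z - z $ u) J y = marg_gauge F J y - y $ u"
proof -
  have "depends_only_on (\<lambda>z. - z $ u) J"
    using assms(3) by (simp add: depends_only_on_def)
  then have "marg_gauge (\<lambda>z. - z $ u + F z) J y = - y $ u + marg_gauge F J y"
    by (rule marg_gauge_add_dependent[OF assms(1,2)])
  then show ?thesis by simp
qed

lemma marg_gauge_restrict:
  assumes "bdd_below (F ` nonneg_orthant)" and "y \<in> nonneg_orthant" and "depends_only_on F K"
  shows "marg_gauge F J y = marg_gauge F (J \<inter> K) y"
proof (rule antisym)
  show "marg_gauge F J y \<le> marg_gauge F (J \<inter> K) y"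
  proof (rule marg_gauge_greatest[OF assms(2)])
    fix w assume w: "w \<in> orthant_fibre (J \<inter> K) y"
    define z where "z = (\<chi> v. if v \<in> K then w $ v else y $ v)"
    have "z \<in> orthant_fibre J y"
      using w assms(2) by (auto simp: orthant_fibre_def z_def)
    moreover have "F z = F w"
      by (rule depends_only_onD[OF assms(3)]) (simp add: z_def)
    ultimately show "marg_gauge F J y \<le> F w"
      using marg_gauge_le[OF assms(1,2)] by metis
  qed
  show "marg_gauge F (J \<inter> K) y \<le> marg_gauge F J y"
  proof (rule marg_gauge_greatest[OF assms(2)])
    fix z assume "z \<in> orthant_fibre J y"
    then have "z \<in> orthant_fibre (J \<inter> K) y" by (auto simp: orthant_fibre_def)
    then show "marg_gauge F (J \<inter> K) y \<le> F z" by (rule marg_gauge_le[OF assms(1,2)])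
  qed
qed

lemma bdd_below_add_orthant:
  fixes A B :: "real ^ 'v \<Rightarrow> real"
  assumes "bdd_below (A ` nonneg_orthant)" and "bdd_below (B ` nonneg_orthant)"
  shows "bdd_below ((\<lambda>z. A z + B z) ` nonneg_orthant)"
proof -
  obtain a b where "\<And>z. z \<in> nonneg_orthant \<Longrightarrow> a \<le> A z" and "\<And>z. z \<in> nonneg_orthant \<Longrightarrow> b \<le> B z"
    using assms by (elim bdd_below_orthantE) blast
  then show ?thesis by (intro bdd_belowI2[of _ "a + b"] add_mono)
qed

lemma marg_gauge_add:
  assumes A: "bdd_below (A ` nonneg_orthant)" "depends_only_on A K"
    and B: "bdd_below (B ` nonneg_orthant)" "depends_only_on B L"
    and y: "y \<in> nonneg_orthant" and KL: "K \<inter> L \<subseteq> J"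
  shows "marg_gauge (\<lambda>z. A z + B z) J y = marg_gauge A J y + marg_gauge B J y"
proof -
  have inner: "marg_gauge (\<lambda>z. A z + B z) (J \<union> K) z = A z + marg_gauge B (J \<inter> L) z"
    if z: "z \<in> nonneg_orthant" for z
  proof -
    have "marg_gauge (\<lambda>z. A z + B z) (J \<union> K) z = A z + marg_gauge B (J \<union> K) z"
      using A(2) by (intro marg_gauge_add_dependent[OF B(1) z]) (auto intro: depends_only_on_mono)
    also have "marg_gauge B (J \<union> K) z = marg_gauge B ((J \<union> K) \<inter> L) z"
      by (rule marg_gauge_restrict[OF B(1) z B(2)])
    also have "(J \<union> K) \<inter> L = J \<inter> L" using KL by auto
    finally show ?thesis .
  qed
  have "marg_gauge (\<lambda>z. A z + B z) J y = marg_gauge (marg_gauge (\<lambda>z. A z + B z) (J \<union> K)) J y"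
    using marg_gauge_marg_gauge[OF bdd_below_add_orthant[OF A(1) B(1)] y, of "J \<union> K" J]
    by (simp add: Int_absorb2)
  also have "\<dots> = marg_gauge (\<lambda>z. marg_gauge B (J \<inter> L) z + A z) J y"
    by (rule marg_gauge_cong[OF y]) (simp add: inner)
  also have "\<dots> = marg_gauge B (J \<inter> L) y + marg_gauge A J y"
    by (rule marg_gauge_add_dependent[OF A(1) y])
       (rule depends_only_on_mono[OF depends_only_on_marg_gauge], simp)
  also have "marg_gauge B (J \<inter> L) y = marg_gauge B J y"
    by (rule marg_gauge_restrict[OF B(1) y B(2), symmetric])
  finally show ?thesis by simp
qed

section \<open>Walks and shortest paths\<close>

lemma is_walk_nth_edge: "is_walk E ps i j \<Longrightarrow> Suc k < length ps \<Longrightarrow> E (ps ! k) (ps ! Suc k)"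
  by (simp add: is_walk_def)

lemma is_walk_first: "is_walk E ps i j \<Longrightarrow> ps ! 0 = i"
  by (metis hd_conv_nth is_walk_def)

lemma is_walk_last: "is_walk E ps i j \<Longrightarrow> ps ! (length ps - 1) = j"
  by (metis last_conv_nth is_walk_def)

lemma is_walk_length_ge_2: "is_walk E ps i j \<Longrightarrow> i \<noteq> j \<Longrightarrow> 2 \<le> length ps"
  unfolding is_walk_def
  by (metis One_nat_def Suc_1 Suc_leI hd_conv_nth last_conv_nth le_neq_implies_less
      length_greater_0_conv diff_Suc_1)

lemma is_walk_splice:
  assumes w: "is_walk E ps i j" and kq: "k \<le> q" and q: "q < length ps"
    and k0: "k = 0 \<Longrightarrow> ps ! q = i" and kE: "k > 0 \<Longrightarrow> E (ps ! (k - 1)) (ps ! q)"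
  shows "is_walk E (take k ps @ drop q ps) i j"
proof -
  let ?qs = "take k ps @ drop q ps"
  have nth: "?qs ! m = (if m < k then ps ! m else ps ! (m - k + q))" if "m < length ?qs" for m
    using that kq q by (auto simp: nth_append min_def) (metis add.commute)
  have "hd ?qs = i"
  proof (cases "k = 0")
    case True
    then show ?thesis using k0 q by (simp add: hd_drop_conv_nth)
  next
    case False
    have "ps \<noteq> []" using q by auto
    then show ?thesis using False q kq is_walk_first[OF w] by (simp add: hd_append hd_conv_nth)
  qed
  moreover have "last ?qs = j" using q w by (simp add: is_walk_def)
  moreover have "E (?qs ! m) (?qs ! Suc m)" if m: "Suc m < length ?qs" for m
  proof -
    have n1: "?qs ! m = (if m < k then ps ! m else ps ! (m - k + q))" using nth m by simp
    have n2: "?qs ! Suc m = (if Suc m < k then ps ! Suc m else ps ! (Suc m - k + q))"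
      using nth m by simp
    consider "Suc m < k" | "Suc m = k" | "k \<le> m" by linarith
    then show ?thesis
    proof cases
      case 1
      then show ?thesis using n1 n2 is_walk_nth_edge[OF w, of m] kq q by simp
    next
      case 2
      then have "m = k - 1" and "0 < k" by auto
      then show ?thesis using n1 n2 kE by simp
    next
      case 3
      then have "Suc (m - k + q) < length ps" and "Suc m - k + q = Suc (m - k + q)"
        using m kq q by auto
      then show ?thesis using n1 n2 3 is_walk_nth_edge[OF w, of "m - k + q"] by simp
    qed
  qed
  ultimately show ?thesis using q by (simp add: is_walk_def)
qed

lemma shortest_path_no_shortcut:
  assumes sp: "is_shortest_path E ps i j" and pq: "Suc p < q" and q: "q < length ps"
  shows "\<not> E (ps ! p) (ps ! q)"
proof
  assume "E (ps ! p) (ps ! q)"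
  then have "is_walk E (take (Suc p) ps @ drop q ps) i j"
    using sp pq q by (intro is_walk_splice) (auto simp: is_shortest_path_def)
  then have "length ps \<le> length (take (Suc p) ps @ drop q ps)"
    using sp unfolding is_shortest_path_def by blast
  then show False using pq q by simp
qed

lemma shortest_path_distinct:
  assumes sp: "is_shortest_path E ps i j"
  shows "distinct ps"
proof (rule ccontr)
  assume "\<not> distinct ps"
  then obtain p q where pq: "p < q" "q < length ps" and e: "ps ! p = ps ! q"
    by (metis distinct_conv_nth linorder_neqE_nat)
  have w: "is_walk E ps i j" using sp by (simp add: is_shortest_path_def)
  have "is_walk E (take p ps @ drop q ps) i j"
  proof (rule is_walk_splice[OF w])
    show "p = 0 \<Longrightarrow> ps ! q = i" using e is_walk_first[OF w] by simp
    show "0 < p \<Longrightarrow> E (ps ! (p - 1)) (ps ! q)"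
      using e is_walk_nth_edge[OF w, of "p - 1"] pq by simp
  qed (use pq in auto)
  then have "length ps \<le> length (take p ps @ drop q ps)"
    using sp unfolding is_shortest_path_def by blast
  then show False using pq by simp
qed

lemma shortest_path_edge:
  assumes sp: "is_shortest_path E ps i j" and "i \<noteq> j" and "E i j"
  shows "ps = [i, j]"
proof -
  have w: "is_walk E ps i j" using sp by (simp add: is_shortest_path_def)
  have "is_walk E [i, j] i j" using \<open>E i j\<close> by (auto simp: is_walk_def nth_Cons split: nat.splits)
  then have "length ps \<le> 2" using sp by (auto simp: is_shortest_path_def)
  with is_walk_length_ge_2[OF w \<open>i \<noteq> j\<close>] have "length ps = 2" by simp
  moreover have "hd ps = i" and "last ps = j" using w by (auto simp: is_walk_def)
  ultimately show ?thesis
    by (cases ps; cases "tl ps") auto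
qed

lemma shortest_path_subgraph:
  assumes sp: "is_shortest_path E ps i j"
    and edges: "\<And>k. Suc k < length ps \<Longrightarrow> E' (ps ! k) (ps ! Suc k)"
    and sub: "\<And>a b. E' a b \<Longrightarrow> E a b"
  shows "is_shortest_path E' ps i j"
proof -
  have "is_walk E' ps i j" using sp edges by (auto simp: is_shortest_path_def is_walk_def)
  moreover have "length ps \<le> length qs" if "is_walk E' qs i j" for qs
    using that sp sub by (auto simp: is_shortest_path_def is_walk_def)
  ultimately show ?thesis by (simp add: is_shortest_path_def)
qed

lemma shortest_path_tl:
  assumes sp: "is_shortest_path E ps i j" and l: "2 \<le> length ps"
  shows "is_shortest_path E (tl ps) (ps ! 1) j"
proof -
  have w: "is_walk E ps i j" using sp by (simp add: is_shortest_path_def)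
  have "tl ps \<noteq> []" using l by (cases ps) auto
  then have "is_walk E (tl ps) (ps ! 1) j"
    using w l by (auto simp: is_walk_def hd_conv_nth nth_tl last_tl)
  moreover have "length (tl ps) \<le> length qs" if q: "is_walk E qs (ps ! 1) j" for qs
  proof -
    have "is_walk E (i # qs) i j"
      using q is_walk_nth_edge[OF w, of 0] l is_walk_first[OF w] unfolding is_walk_def
      by (auto simp: nth_Cons hd_conv_nth split: nat.splits)
    then have "length ps \<le> length (i # qs)" using sp unfolding is_shortest_path_def by blast
    then show ?thesis by simp
  qed
  ultimately show ?thesis by (simp add: is_shortest_path_def)
qed

lemma is_walk_rev:
  assumes w: "is_walk E ps i j" and sym: "\<And>a b. E a b \<Longrightarrow> E b a"
  shows "is_walk E (rev ps) j i"
proof -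
  have "E (rev ps ! k) (rev ps ! Suc k)" if k: "Suc k < length ps" for k
  proof -
    have "E (ps ! (length ps - Suc (Suc k))) (ps ! Suc (length ps - Suc (Suc k)))"
      using is_walk_nth_edge[OF w] k by simp
    moreover have "Suc (length ps - Suc (Suc k)) = length ps - Suc k" using k by simp
    ultimately show ?thesis using k sym by (simp add: rev_nth)
  qed
  then show ?thesis using w by (auto simp: is_walk_def hd_rev last_rev)
qed

lemma shortest_path_rev:
  assumes "is_shortest_path E ps i j" and "\<And>a b. E a b \<Longrightarrow> E b a"
  shows "is_shortest_path E (rev ps) j i"
  using assms is_walk_rev unfolding is_shortest_path_def by (metis length_rev)

locale glued_clique =
  fixes E E' :: "'v \<Rightarrow> 'v \<Rightarrow> bool" and C :: "'v set" and s :: 'v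
  assumes glued_edge_iff: "\<And>a b. E' a b \<longleftrightarrow> E a b \<or> (a \<noteq> b \<and> a \<in> C \<and> b \<in> C)"
    and fresh: "\<And>a b. E a b \<Longrightarrow> a \<notin> C - {s} \<and> b \<notin> C - {s}"
begin

lemma glued_edge_fresh: "E' a b \<Longrightarrow> a \<in> C - {s} \<or> b \<in> C - {s} \<Longrightarrow> a \<in> C \<and> b \<in> C"
  unfolding glued_edge_iff using fresh by blast

lemma shortest_path_avoiding:
  assumes sp: "is_shortest_path E' ps i j" and ij: "i \<notin> C - {s}" "j \<notin> C - {s}"
  shows "is_shortest_path E ps i j"
proof -
  have w: "is_walk E' ps i j" using sp by (simp add: is_shortest_path_def)
  have avoid: "ps ! p \<notin> C - {s}" if p: "p < length ps" for p
  proof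
    assume pC: "ps ! p \<in> C - {s}"
    have "p \<noteq> 0" "p \<noteq> length ps - 1"
      using pC ij is_walk_first[OF w] is_walk_last[OF w] by metis+
    then have p1: "0 < p" and p2: "Suc p < length ps" using p by linarith+
    have "E' (ps ! (p - 1)) (ps ! p)" and "E' (ps ! p) (ps ! Suc p)"
      using is_walk_nth_edge[OF w, of "p - 1"] is_walk_nth_edge[OF w, of p] p1 p2 by simp_all
    then have "ps ! (p - 1) \<in> C" and "ps ! Suc p \<in> C"
      using glued_edge_fresh pC by blast+
    moreover have "ps ! (p - 1) \<noteq> ps ! Suc p"
      using nth_eq_iff_index_eq[OF shortest_path_distinct[OF sp], of "p - 1" "Suc p"] p1 p2 by simp
    ultimately have "E' (ps ! (p - 1)) (ps ! Suc p)" by (simp add: glued_edge_iff)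
    then show False using shortest_path_no_shortcut[OF sp, of "p - 1" "Suc p"] p1 p2 by simp
  qed
  show ?thesis
  proof (rule shortest_path_subgraph[OF sp])
    fix k assume k: "Suc k < length ps"
    have "E' (ps ! k) (ps ! Suc k)" by (rule is_walk_nth_edge[OF w k])
    moreover have "ps ! k \<notin> C - {s}" and "ps ! Suc k \<notin> C - {s}" using avoid k by simp_all
    ultimately show "E (ps ! k) (ps ! Suc k)" unfolding glued_edge_iff by auto
  qed (simp add: glued_edge_iff)
qed

lemma shortest_path_entering:
  assumes sp: "is_shortest_path E' ps i j" and i: "i \<in> C - {s}" and j: "j \<notin> C"
  obtains rest where "ps = i # s # rest" and "is_shortest_path E (s # rest) s j" and "i \<notin> set (s # rest)"
proof -
  have w: "is_walk E' ps i j" using sp by (simp add: is_shortest_path_def)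
  have L: "2 \<le> length ps" using is_walk_length_ge_2[OF w] i j by blast
  have first: "ps ! 0 = i" by (rule is_walk_first[OF w])
  have far: "ps ! p \<notin> C" if p: "2 \<le> p" "p < length ps" for p
  proof
    assume "ps ! p \<in> C"
    moreover have "ps ! 0 \<noteq> ps ! p"
    proof -
      have "0 < length ps" using p by linarith
      then show ?thesis using nth_eq_iff_index_eq[OF shortest_path_distinct[OF sp] _ p(2), of 0] p(1) by simp
    qed
    ultimately have "E' (ps ! 0) (ps ! p)" using first i by (simp add: glued_edge_iff)
    then show False using shortest_path_no_shortcut[OF sp, of 0 p] p by simp
  qed
  have "ps ! 1 \<in> C"
    using glued_edge_fresh[OF _ disjI1[OF i]] is_walk_nth_edge[OF w, of 0] L first by simp
  moreover have L3: "3 \<le> length ps"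
    using L \<open>ps ! 1 \<in> C\<close> j is_walk_last[OF w] by (cases "length ps = 2") auto
  moreover have "ps ! 1 \<notin> C - {s}"
  proof
    assume "ps ! 1 \<in> C - {s}"
    moreover have "E' (ps ! 1) (ps ! Suc 1)" using is_walk_nth_edge[OF w, of 1] L3 by simp
    ultimately have "ps ! Suc 1 \<in> C" using glued_edge_fresh by blast
    then show False using far[of "Suc 1"] L3 by simp
  qed
  ultimately have "ps ! 1 = s" by blast
  then obtain rest where ps: "ps = i # s # rest"
    using L first by (cases ps; cases "tl ps") auto
  have "is_shortest_path E' (s # rest) s j"
    using shortest_path_tl[OF sp L] ps by simp
  then have "is_shortest_path E (s # rest) s j"
    by (rule shortest_path_avoiding) (use j in auto)
  moreover have "i \<notin> set (s # rest)"
    using shortest_path_distinct[OF sp] ps by simp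
  ultimately show ?thesis using ps that by blast
qed

end

section \<open>Exponential margins bound the gauge from below\<close>

lemma nn_integral_lborel_scaleR:
  fixes F :: "'a::euclidean_space \<Rightarrow> ennreal"
  assumes "F \<in> borel_measurable borel" and "0 < t"
  shows "(\<integral>\<^sup>+ w. F w \<partial>lborel) = ennreal (t ^ DIM('a)) * (\<integral>\<^sup>+ x. F (t *\<^sub>R x) \<partial>lborel)"
proof -
  have "(\<integral>\<^sup>+ w. F w \<partial>lborel) =
      (\<integral>\<^sup>+ w. F w \<partial>density (distr lborel borel (\<lambda>x. 0 + t *\<^sub>R x)) (\<lambda>_. \<bar>t\<bar> ^ DIM('a)))"
    using lborel_affine[of t "0 :: 'a"] assms(2) by simp
  also have "\<dots> = (\<integral>\<^sup>+ x. ennreal (\<bar>t\<bar> ^ DIM('a)) * F (t *\<^sub>R x) \<partial>lborel)"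
    using assms(1) by (simp add: nn_integral_density nn_integral_distr)
  also have "\<dots> = ennreal (t ^ DIM('a)) * (\<integral>\<^sup>+ x. F (t *\<^sub>R x) \<partial>lborel)"
    using assms by (simp add: nn_integral_cmult)
  finally show ?thesis .
qed

lemma scaled_density_integral_le_exp:
  fixes X :: "'s \<Rightarrow> real ^ 'v::finite"
  assumes "prob_space M" and D: "distributed M lborel X (\<lambda>y. ennreal (f y))"
    and Du: "distributed M lborel (\<lambda>\<omega>. X \<omega> $ u) (exponential_density 1)"
    and B: "B \<in> sets borel" "\<And>w. w \<in> B \<Longrightarrow> b < w $ u" and "0 \<le> b" and t: "1 \<le> t"
  shows "(\<integral>\<^sup>+ w. ennreal (f (t *\<^sub>R w)) * indicator B w \<partial>lborel) \<le> ennreal (exp (- (t * b)))"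
proof -
  interpret prob_space M by fact
  define S where "S = {w. (1 / t) *\<^sub>R w \<in> B}"
  have [measurable]: "B \<in> sets borel" by (fact B(1))
  have [measurable]: "S \<in> sets borel" unfolding S_def by measurable
  have [measurable]: "(\<lambda>y. ennreal (f y)) \<in> borel_measurable borel"
    using distributed_borel_measurable[OF D] by simp
  let ?I = "\<integral>\<^sup>+ w. ennreal (f (t *\<^sub>R w)) * indicator B w \<partial>lborel"
  have "?I = (\<integral>\<^sup>+ w. ennreal (f (t *\<^sub>R w)) * indicator S (t *\<^sub>R w) \<partial>lborel)"
    using t by (intro nn_integral_cong) (simp add: S_def indicator_def)
  then have I: "ennreal (t ^ CARD('v)) * ?I = (\<integral>\<^sup>+ w. ennreal (f w) * indicator S w \<partial>lborel)"
    using nn_integral_lborel_scaleR[of "\<lambda>w. ennreal (f w) * indicator S w" t] t by simp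
  have "(1 :: ennreal) \<le> ennreal (t ^ CARD('v))" using t by simp
  then have "?I \<le> ennreal (t ^ CARD('v)) * ?I"
    using mult_right_mono[of 1 "ennreal (t ^ CARD('v))" ?I] by simp
  also have "\<dots> = (\<integral>\<^sup>+ w. ennreal (f w) * indicator S w \<partial>lborel)" by (fact I)
  also have "\<dots> = emeasure M (X -` S \<inter> space M)"
    by (rule distributed_emeasure[OF D, symmetric]) simp
  also have "\<dots> \<le> emeasure M {\<omega> \<in> space M. t * b < X \<omega> $ u}"
  proof (rule emeasure_mono)
    show "X -` S \<inter> space M \<subseteq> {\<omega> \<in> space M. t * b < X \<omega> $ u}"
    proof safe
      fix \<omega> assume "\<omega> \<in> space M" and "X \<omega> \<in> S"
      then have "b < X \<omega> $ u / t" using B(2) by (force simp: S_def)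
      then show "t * b < X \<omega> $ u" using t by (simp add: field_simps)
    qed
    show "{\<omega> \<in> space M. t * b < X \<omega> $ u} \<in> sets M"
      using distributed_measurable[OF Du] by measurable
  qed
  also have "\<dots> = ennreal (exp (- (t * b)))"
    using exponential_distributedD_gt[OF Du, of "t * b"] t \<open>0 \<le> b\<close>
    by (simp add: emeasure_eq_measure)
  finally show ?thesis .
qed

lemma gauge_scaled_density_eventually_gt:
  assumes "is_gauge f g" and "v \<in> nonneg_orthant" and "g v < c"
  shows "\<forall>\<^sub>F n in sequentially. 1 < exp (real n * c) * f (real n *\<^sub>R v)"
proof -
  have pos: "\<forall>\<^sub>F t in at_top. 0 < f (t *\<^sub>R v)"
    and lim: "((\<lambda>t. - ln (f (t *\<^sub>R v)) / t) \<longlongrightarrow> g v) at_top"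
    using assms(1,2) unfolding is_gauge_def by (auto dest!: bspec[of _ _ v] spec[of _ "\<lambda>_. v"])
  have "\<forall>\<^sub>F t in at_top. 1 < exp (t * c) * f (t *\<^sub>R v)"
    using order_tendstoD(2)[OF lim assms(3)] pos eventually_gt_at_top[of 0]
  proof eventually_elim
    case (elim t)
    then have "exp (- (t * c)) < f (t *\<^sub>R v)"
      by (simp add: field_simps) (metis exp_less_cancel_iff exp_ln minus_less_iff)
    then have "exp (t * c) * exp (- (t * c)) < exp (t * c) * f (t *\<^sub>R v)" by simp
    then show ?case by (simp add: exp_minus)
  qed
  then show ?thesis
    using filterlim_real_sequentially unfolding filterlim_iff by blast
qed

lemma orthant_ball_near:
  fixes y :: "real ^ 'v::finite"
  assumes "y \<in> nonneg_orthant" and "0 < r"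
  obtains c \<rho> where "0 < \<rho>" and "ball c \<rho> \<subseteq> nonneg_orthant \<inter> ball y r"
proof -
  define e :: "real ^ 'v" where "e = (\<chi> k. 1)"
  define \<rho> where "\<rho> = r / (1 + norm e)"
  have "0 < 1 + norm e" by (simp add: add_pos_nonneg)
  then have "0 < \<rho>" and \<rho>: "\<rho> * (1 + norm e) = r"
    using assms(2) by (simp_all add: \<rho>_def)
  have "w \<in> nonneg_orthant \<inter> ball y r" if w: "w \<in> ball (y + \<rho> *\<^sub>R e) \<rho>" for w
  proof -
    have "\<bar>(w - (y + \<rho> *\<^sub>R e)) $ k\<bar> < \<rho>" for k
      using component_le_norm_cart[of "w - (y + \<rho> *\<^sub>R e)" k] w
      by (simp add: dist_norm norm_minus_commute)
    then have "y $ k < w $ k" for k by (simp add: e_def abs_less_iff)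
    then have "w \<in> nonneg_orthant" using assms(1) by (auto intro: less_imp_le order.strict_trans1)
    moreover have "dist y w \<le> dist y (y + \<rho> *\<^sub>R e) + dist (y + \<rho> *\<^sub>R e) w"
      by (rule dist_triangle)
    then have "dist y w < \<rho> * (1 + norm e)"
      using w \<open>0 < \<rho>\<close> by (simp add: dist_norm algebra_simps)
    ultimately show ?thesis using \<rho> by simp
  qed
  then show ?thesis using that \<open>0 < \<rho>\<close> by blast
qed

text \<open>On \<open>B\<close> the density at \<open>t w\<close> exceeds \<open>exp (- t a)\<close> for large \<open>t\<close>, whereas the exponential
  tail of \<open>X\<^sub>u\<close> caps the mass of \<open>t B\<close> by \<open>exp (- t b)\<close>; Fatou's lemma then forces \<open>B\<close> to be null.\<close>

lemma gauge_lt_coordinate_null: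
  fixes X :: "'s \<Rightarrow> real ^ 'v::finite"
  assumes "prob_space M" and D: "distributed M lborel X (\<lambda>y. ennreal (f y))"
    and Du: "distributed M lborel (\<lambda>\<omega>. X \<omega> $ u) (exponential_density 1)"
    and G: "is_gauge f g" and [measurable]: "B \<in> sets borel"
    and B: "\<And>w. w \<in> B \<Longrightarrow> w \<in> nonneg_orthant \<and> g w < a \<and> b < w $ u" and "a < b" and "0 \<le> b"
  shows "emeasure lborel B = 0"
proof -
  define G where "G n w = ennreal (exp (real n * a)) * ennreal (f (real n *\<^sub>R w)) * indicator B w" for n w
  have [measurable]: "(\<lambda>y. ennreal (f y)) \<in> borel_measurable borel"
    using distributed_borel_measurable[OF D] by simp
  have lower: "1 \<le> liminf (\<lambda>n. G n w)" if "w \<in> B" for w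
  proof (rule Liminf_bounded)
    have "\<forall>\<^sub>F n in sequentially. 1 < exp (real n * a) * f (real n *\<^sub>R w)"
      using B[OF that] by (intro gauge_scaled_density_eventually_gt[OF G]) auto
    then show "\<forall>\<^sub>F n in sequentially. 1 \<le> G n w"
      by eventually_elim (use that in \<open>simp add: G_def ennreal_mult'[symmetric]\<close>)
  qed
  have upper: "(\<integral>\<^sup>+ w. G n w \<partial>lborel) \<le> ennreal (exp (- (real n * (b - a))))" if "1 \<le> n" for n
  proof -
    have "(\<integral>\<^sup>+ w. G n w \<partial>lborel) =
        ennreal (exp (real n * a)) * (\<integral>\<^sup>+ w. ennreal (f (real n *\<^sub>R w)) * indicator B w \<partial>lborel)"
      unfolding G_def by (subst nn_integral_cmult[symmetric]) (auto simp: mult.assoc)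
    also have "\<dots> \<le> ennreal (exp (real n * a)) * ennreal (exp (- (real n * b)))"
      using that B \<open>0 \<le> b\<close> by (intro mult_left_mono scaled_density_integral_le_exp[OF assms(1) D Du]) auto
    also have "\<dots> = ennreal (exp (- (real n * (b - a))))"
      by (simp add: ennreal_mult[symmetric] exp_add[symmetric] algebra_simps)
    finally show ?thesis .
  qed
  have "emeasure lborel B = (\<integral>\<^sup>+ w. indicator B w \<partial>lborel)" by simp
  also have "\<dots> \<le> (\<integral>\<^sup>+ w. liminf (\<lambda>n. G n w) \<partial>lborel)"
    by (rule nn_integral_mono) (simp add: indicator_def lower)
  also have "\<dots> \<le> liminf (\<lambda>n. \<integral>\<^sup>+ w. G n w \<partial>lborel)"
    by (rule nn_integral_liminf) (simp add: G_def)
  also have "\<dots> \<le> liminf (\<lambda>n. ennreal (exp (- (real n * (b - a)))))"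
    using upper by (intro Liminf_mono) (auto simp: eventually_sequentially)
  also have "\<dots> = 0"
  proof (intro lim_imp_Liminf)
    have "(\<lambda>n. exp (- (b - a)) ^ n) \<longlonglongrightarrow> 0" using \<open>a < b\<close> by (intro LIMSEQ_power_zero) simp
    moreover have "exp (- (b - a)) ^ n = exp (- (real n * (b - a)))" for n
      by (simp add: exp_of_nat_mult[symmetric] algebra_simps)
    ultimately have "(\<lambda>n. exp (- (real n * (b - a)))) \<longlonglongrightarrow> 0" by simp
    then show "(\<lambda>n. ennreal (exp (- (real n * (b - a))))) \<longlonglongrightarrow> 0"
      using tendsto_ennrealI by fastforce
  qed simp
  finally show ?thesis by simp
qed

lemma gauge_ge_coordinate:
  fixes X :: "'s \<Rightarrow> real ^ 'v::finite"
  assumes "prob_space M" and D: "distributed M lborel X (\<lambda>y. ennreal (f y))"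
    and Du: "distributed M lborel (\<lambda>\<omega>. X \<omega> $ u) (exponential_density 1)"
    and G: "is_gauge f g" and y: "y \<in> nonneg_orthant"
  shows "y $ u \<le> g y"
proof (rule ccontr)
  assume "\<not> y $ u \<le> g y"
  define \<delta> where "\<delta> = (y $ u - g y) / 3"
  have "0 < \<delta>" and "0 \<le> g y"
    using \<open>\<not> y $ u \<le> g y\<close> G y by (auto simp: \<delta>_def is_gauge_def)
  obtain r where "0 < r" and r: "\<And>w. w \<in> nonneg_orthant \<Longrightarrow> dist w y < r \<Longrightarrow> dist (g w) (g y) < \<delta>"
    using G y \<open>0 < \<delta>\<close> unfolding is_gauge_def continuous_on_iff by metis
  have "0 < min r \<delta>" using \<open>0 < r\<close> \<open>0 < \<delta>\<close> by simp
  then obtain c \<rho> where "0 < \<rho>" and ball: "ball c \<rho> \<subseteq> nonneg_orthant \<inter> ball y (min r \<delta>)"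
    by (rule orthant_ball_near[OF y])
  have "w \<in> nonneg_orthant \<and> g w < g y + \<delta> \<and> y $ u - \<delta> < w $ u" if "w \<in> ball c \<rho>" for w
  proof -
    have "w \<in> nonneg_orthant" and "dist w y < r" and "dist w y < \<delta>"
      using ball that by (auto simp: dist_commute)
    moreover from this have "\<bar>w $ u - y $ u\<bar> < \<delta>"
      using component_le_norm_cart[of "w - y" u] by (simp add: dist_norm)
    moreover have "dist (g w) (g y) < \<delta>" using r calculation by blast
    ultimately show ?thesis by (auto simp: dist_real_def abs_less_iff)
  qed
  moreover have "g y + \<delta> < y $ u - \<delta>" and "0 \<le> y $ u - \<delta>"
    using \<open>0 < \<delta>\<close> \<open>0 \<le> g y\<close> by (auto simp: \<delta>_def field_simps)
  ultimately have "emeasure lborel (ball c \<rho>) = 0"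
    by (intro gauge_lt_coordinate_null[OF assms(1) D Du G, where a = "g y + \<delta>" and b = "y $ u - \<delta>"])
       auto
  then show False
    using \<open>0 < \<rho>\<close> unit_ball_vol_pos[of "real CARD('v)"] by (simp add: emeasure_ball)
qed

section \<open>Chain gauges\<close>

definition chain_gauge :: "(real ^ 'v \<Rightarrow> real) \<Rightarrow> 'v list \<Rightarrow> real ^ 'v \<Rightarrow> real" where
  "chain_gauge g ps z =
     (\<Sum>k\<in>{1..length ps - 1}. marg_gauge g {ps ! (k - 1), ps ! k} z) - (\<Sum>k\<in>{1..<length ps - 1}. z $ (ps ! k))"

lemma chain_gauge_edge: "chain_gauge g [a, b] = marg_gauge g {a, b}"
  by (simp add: chain_gauge_def fun_eq_iff)

lemma chain_gauge_Cons:
  assumes "ps \<noteq> []"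
  shows "chain_gauge g (a # b # ps) z = marg_gauge g {a, b} z - z $ b + chain_gauge g (b # ps) z"
proof -
  define L where "L = length ps"
  have L: "1 \<le> L" using assms by (simp add: L_def Suc_leI)
  let ?qs = "a # b # ps"
  let ?F = "\<lambda>k. marg_gauge g {?qs ! (k - 1), ?qs ! k} z"
  have "(\<Sum>k\<in>{1..Suc L}. ?F k) = ?F 1 + (\<Sum>k\<in>{Suc 1..Suc L}. ?F k)"
    by (rule sum.atLeast_Suc_atMost) simp
  also have "(\<Sum>k\<in>{Suc 1..Suc L}. ?F k) = (\<Sum>k\<in>{1..L}. ?F (Suc k))"
    by (rule sum.shift_bounds_cl_Suc_ivl)
  finally have F: "(\<Sum>k\<in>{1..Suc L}. ?F k) =
      marg_gauge g {a, b} z + (\<Sum>k\<in>{1..L}. marg_gauge g {(b # ps) ! (k - 1), (b # ps) ! k} z)"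
    using L by (simp add: nth_Cons')
  have "(\<Sum>k\<in>{1..<Suc L}. z $ (?qs ! k)) = z $ (?qs ! 1) + (\<Sum>k\<in>{Suc 1..<Suc L}. z $ (?qs ! k))"
    by (rule sum.atLeast_Suc_lessThan) (use L in simp)
  also have "(\<Sum>k\<in>{Suc 1..<Suc L}. z $ (?qs ! k)) = (\<Sum>k\<in>{1..<L}. z $ (?qs ! Suc k))"
    by (rule sum.shift_bounds_Suc_ivl)
  finally have G: "(\<Sum>k\<in>{1..<Suc L}. z $ (?qs ! k)) = z $ b + (\<Sum>k\<in>{1..<L}. z $ ((b # ps) ! k))"
    by simp
  show ?thesis using F G by (simp add: chain_gauge_def L_def)
qed

lemma chain_gauge_nonneg:
  assumes coord: "\<And>z v. z \<in> nonneg_orthant \<Longrightarrow> z $ v \<le> g z" and z: "z \<in> nonneg_orthant"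
  shows "0 \<le> chain_gauge g ps z"
proof (induction ps rule: induct_list012)
  case (3 a b ps)
  have "z $ b \<le> marg_gauge g {a, b} z" and "0 \<le> z $ a"
    using coord z by (auto intro: marg_gauge_ge_coord)
  moreover have "z $ a \<le> marg_gauge g {a, b} z"
    using coord z by (auto intro: marg_gauge_ge_coord)
  ultimately show ?case
    using 3(2) by (cases "ps = []") (auto simp: chain_gauge_Cons chain_gauge_edge)
qed (simp_all add: chain_gauge_def)

lemma depends_only_on_chain_gauge:
  fixes ps :: "'v::finite list"
  shows "depends_only_on (chain_gauge g ps) (set ps)"
  unfolding depends_only_on_def
proof (intro allI impI)
  fix y z :: "real ^ 'v" assume yz: "\<forall>v\<in>set ps. y $ v = z $ v"
  have "marg_gauge g {ps ! (k - 1), ps ! k} y = marg_gauge g {ps ! (k - 1), ps ! k} z"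
    if "k \<in> {1..length ps - 1}" for k
    using that yz by (intro depends_only_onD[OF depends_only_on_marg_gauge]) auto
  moreover have "y $ (ps ! k) = z $ (ps ! k)" if "k \<in> {1..<length ps - 1}" for k
    using that yz by auto
  ultimately show "chain_gauge g ps y = chain_gauge g ps z"
    unfolding chain_gauge_def by (metis (no_types, lifting) sum.cong)
qed

lemma chain_gauge_rev: "chain_gauge g (rev ps) = chain_gauge g ps"
proof
  fix z
  define m where "m = length ps - 1"
  have "(\<Sum>k\<in>{1..m}. marg_gauge g {rev ps ! (k - 1), rev ps ! k} z) =
        (\<Sum>k\<in>{1..m}. marg_gauge g {ps ! (k - 1), ps ! k} z)"
    by (subst sum.atLeastAtMost_rev) (auto intro!: sum.cong simp: rev_nth m_def insert_commute)
  moreover have "(\<Sum>k\<in>{1..<m}. z $ (rev ps ! k)) = (\<Sum>k\<in>{1..<m}. z $ (ps ! k))"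
    by (subst sum.atLeastLessThan_rev) (auto intro!: sum.cong simp: rev_nth m_def)
  ultimately show "chain_gauge g (rev ps) z = chain_gauge g ps z"
    by (simp add: chain_gauge_def m_def)
qed

lemma marg_chain_gauge_Cons:
  fixes g :: "real ^ 'v::finite \<Rightarrow> real"
  assumes coord: "\<And>z v. z \<in> nonneg_orthant \<Longrightarrow> z $ v \<le> g z"
    and a: "a \<notin> set (b # ps)" and "ps \<noteq> []" and y: "y \<in> nonneg_orthant"
  shows "marg_gauge (chain_gauge g (a # b # ps)) {a, j} y =
    marg_gauge (\<lambda>z. marg_gauge (chain_gauge g (b # ps)) {b, j} z + (marg_gauge g {a, b} z - z $ b)) {a, j} y"
proof -
  let ?K = "{a, j, b}"
  have bdd: "bdd_below (chain_gauge g qs ` nonneg_orthant)" for qs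
    using chain_gauge_nonneg[OF coord] by (intro bdd_belowI2[of _ 0]) simp
  have "marg_gauge (chain_gauge g (a # b # ps)) {a, j} y =
      marg_gauge (marg_gauge (chain_gauge g (a # b # ps)) ?K) {a, j} y"
    using marg_gauge_marg_gauge[OF bdd y, of "a # b # ps" ?K "{a, j}"] by (simp add: Int_absorb2)
  also have "\<dots> = marg_gauge (\<lambda>z. marg_gauge (chain_gauge g (b # ps)) {b, j} z + (marg_gauge g {a, b} z - z $ b)) {a, j} y"
  proof (rule marg_gauge_cong[OF y])
    fix z :: "real ^ 'v" assume z: "z \<in> nonneg_orthant"
    have dep: "depends_only_on (\<lambda>w. marg_gauge g {a, b} w - w $ b) ?K"
      by (auto simp: depends_only_on_def intro: depends_only_onD[OF depends_only_on_marg_gauge])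
    have "marg_gauge (chain_gauge g (a # b # ps)) ?K z =
        marg_gauge (\<lambda>w. (marg_gauge g {a, b} w - w $ b) + chain_gauge g (b # ps) w) ?K z"
      by (rule marg_gauge_cong[OF z]) (simp add: chain_gauge_Cons[OF \<open>ps \<noteq> []\<close>])
    also have "\<dots> = (marg_gauge g {a, b} z - z $ b) + marg_gauge (chain_gauge g (b # ps)) ?K z"
      by (rule marg_gauge_add_dependent[OF bdd z dep])
    also have "marg_gauge (chain_gauge g (b # ps)) ?K z = marg_gauge (chain_gauge g (b # ps)) (?K \<inter> set (b # ps)) z"
      by (rule marg_gauge_restrict[OF bdd z depends_only_on_chain_gauge])
    also have "?K \<inter> set (b # ps) = {b, j} \<inter> set (b # ps)" using a by auto
    also have "marg_gauge (chain_gauge g (b # ps)) \<dots> z = marg_gauge (chain_gauge g (b # ps)) {b, j} z"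
      by (rule marg_gauge_restrict[OF bdd z depends_only_on_chain_gauge, symmetric])
    finally show "marg_gauge (chain_gauge g (a # b # ps)) ?K z =
        marg_gauge (chain_gauge g (b # ps)) {b, j} z + (marg_gauge g {a, b} z - z $ b)" by simp
  qed
  finally show ?thesis .
qed

section \<open>Block factorisations\<close>

definition clique_union :: "'v set list \<Rightarrow> nat \<Rightarrow> 'v set" where
  "clique_union Cs n = (\<Union>l<n. Cs ! l)"

definition clique_graph :: "'v set list \<Rightarrow> nat \<Rightarrow> 'v \<Rightarrow> 'v \<Rightarrow> bool" where
  "clique_graph Cs n a b \<longleftrightarrow> a \<noteq> b \<and> (\<exists>l<n. a \<in> Cs ! l \<and> b \<in> Cs ! l)"

lemma clique_union_Suc: "clique_union Cs (Suc n) = clique_union Cs n \<union> Cs ! n"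
  by (auto simp: clique_union_def less_Suc_eq)

lemma clique_graph_Suc:
  "clique_graph Cs (Suc n) a b \<longleftrightarrow> clique_graph Cs n a b \<or> (a \<noteq> b \<and> a \<in> Cs ! n \<and> b \<in> Cs ! n)"
  by (auto simp: clique_graph_def less_Suc_eq)

lemma clique_graph_union: "clique_graph Cs n a b \<Longrightarrow> a \<in> clique_union Cs n \<and> b \<in> clique_union Cs n"
  by (auto simp: clique_graph_def clique_union_def)

lemma clique_graph_sym: "clique_graph Cs n a b \<Longrightarrow> clique_graph Cs n b a"
  by (auto simp: clique_graph_def)

locale block_gauge =
  fixes Cs :: "'v::finite set list" and s :: "nat \<Rightarrow> 'v" and g :: "real ^ 'v \<Rightarrow> real"
  assumes separator_eq: "\<And>k. 1 \<le> k \<Longrightarrow> k < length Cs \<Longrightarrow> separator Cs k = {s k}"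
    and coord_le_gauge: "\<And>z v. z \<in> nonneg_orthant \<Longrightarrow> z $ v \<le> g z"
    and gauge_factorization: "\<And>z. z \<in> nonneg_orthant \<Longrightarrow>
      g z = (\<Sum>l<length Cs. marg_gauge g (Cs ! l) z) - (\<Sum>k\<in>{1..<length Cs}. z $ s k)"
begin

abbreviation N where "N \<equiv> length Cs"

definition partial_gauge :: "nat \<Rightarrow> real ^ 'v \<Rightarrow> real" where
  "partial_gauge n z = (\<Sum>l<n. marg_gauge g (Cs ! l) z) - (\<Sum>k\<in>{1..<n}. z $ s k)"

lemma bdd_below_gauge: "bdd_below (g ` nonneg_orthant)"
  by (rule bdd_belowI2[of _ 0]) (metis coord_le_gauge mem_nonneg_orthant order_trans)

lemma coord_le_marg_gauge: "y \<in> nonneg_orthant \<Longrightarrow> v \<in> J \<Longrightarrow> y $ v \<le> marg_gauge g J y"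
  by (rule marg_gauge_ge_coord) (rule coord_le_gauge)

lemma marg_gauge_nonneg: "y \<in> nonneg_orthant \<Longrightarrow> 0 \<le> marg_gauge g J y"
  by (rule marg_gauge_lower_bound) (metis coord_le_gauge mem_nonneg_orthant order_trans)

lemma bdd_below_marg_gauge_orthant: "bdd_below (marg_gauge g J ` nonneg_orthant)"
  by (rule bdd_below_marg_gauge[OF bdd_below_gauge])

lemma separator_in_clique: "1 \<le> k \<Longrightarrow> k < N \<Longrightarrow> s k \<in> Cs ! k"
  using separator_eq[of k] by (auto simp: separator_def)

lemma separator_in_earlier_clique: "1 \<le> k \<Longrightarrow> k < N \<Longrightarrow> \<exists>r<k. s k \<in> Cs ! r"
  using separator_eq[of k] by (auto simp: separator_def)

lemma clique_inter_union: "1 \<le> k \<Longrightarrow> k < N \<Longrightarrow> Cs ! k \<inter> clique_union Cs k = {s k}"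
  using separator_eq[of k] by (simp add: separator_def clique_union_def)

lemma partial_gauge_Suc_0: "partial_gauge (Suc 0) = marg_gauge g (Cs ! 0)"
  by (simp add: partial_gauge_def fun_eq_iff)

lemma partial_gauge_Suc:
  "1 \<le> n \<Longrightarrow> partial_gauge (Suc n) z = partial_gauge n z + (marg_gauge g (Cs ! n) z - z $ s n)"
  by (simp add: partial_gauge_def sum.atLeastLessThan_Suc)

lemma partial_gauge_N: "z \<in> nonneg_orthant \<Longrightarrow> partial_gauge N z = g z"
  by (simp add: partial_gauge_def gauge_factorization)

lemma partial_gauge_mono:
  assumes "m \<le> n" and "n \<le> N" and z: "z \<in> nonneg_orthant"
  shows "partial_gauge m z \<le> partial_gauge n z"
  using assms(1,2)
proof (induction n rule: dec_induct)
  case (step n)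
  then have "n < N" by simp
  have "partial_gauge n z \<le> partial_gauge (Suc n) z"
  proof (cases "n = 0")
    case True
    then show ?thesis using marg_gauge_nonneg[OF z] by (simp add: partial_gauge_def)
  next
    case False
    then show ?thesis
      using partial_gauge_Suc[of n z] coord_le_marg_gauge[OF z separator_in_clique[of n]] \<open>n < N\<close> by simp
  qed
  with step show ?case by simp
qed simp

lemma partial_gauge_nonneg: "n \<le> N \<Longrightarrow> z \<in> nonneg_orthant \<Longrightarrow> 0 \<le> partial_gauge n z"
  using partial_gauge_mono[of 0 n z] by (simp add: partial_gauge_def)

lemma bdd_below_partial_gauge: "n \<le> N \<Longrightarrow> bdd_below (partial_gauge n ` nonneg_orthant)"
  by (rule bdd_belowI2[of _ 0]) (rule partial_gauge_nonneg)

lemma depends_only_on_partial_gauge: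
  assumes "n \<le> N"
  shows "depends_only_on (partial_gauge n) (clique_union Cs n)"
  unfolding depends_only_on_def
proof (intro allI impI)
  fix y z :: "real ^ 'v" assume yz: "\<forall>v\<in>clique_union Cs n. y $ v = z $ v"
  have "marg_gauge g (Cs ! l) y = marg_gauge g (Cs ! l) z" if "l < n" for l
    using yz that by (intro depends_only_onD[OF depends_only_on_marg_gauge]) (auto simp: clique_union_def)
  moreover have "y $ s k = z $ s k" if "k \<in> {1..<n}" for k
    using yz that assms separator_in_clique[of k] by (auto simp: clique_union_def)
  ultimately show "partial_gauge n y = partial_gauge n z"
    unfolding partial_gauge_def by (metis (no_types, lifting) lessThan_iff sum.cong)
qed

lemma coord_le_partial_gauge:
  assumes "r < n" and "n \<le> N" and "u \<in> Cs ! r" and z: "z \<in> nonneg_orthant"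
  shows "z $ u \<le> partial_gauge n z"
proof -
  have "z $ u \<le> partial_gauge (Suc r) z" if "r < N" "u \<in> Cs ! r" for r u
    using that
  proof (induction r arbitrary: u rule: less_induct)
    case (less r)
    show ?case
    proof (cases "r = 0")
      case True
      then show ?thesis using coord_le_marg_gauge[OF z less.prems(2)] by (simp add: partial_gauge_Suc_0)
    next
      case False
      then obtain r' where r': "r' < r" "s r \<in> Cs ! r'"
        using separator_in_earlier_clique[of r] less.prems(1) by auto
      have "z $ s r \<le> partial_gauge (Suc r') z" using less.IH[OF r'(1) _ r'(2)] less.prems(1) r'(1) by simp
      also have "\<dots> \<le> partial_gauge r z" using partial_gauge_mono[OF _ _ z] r'(1) less.prems(1) by simp
      finally show ?thesis
        using partial_gauge_Suc[of r z] coord_le_marg_gauge[OF z less.prems(2)] False by simp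
    qed
  qed
  then have "z $ u \<le> partial_gauge (Suc r) z" using assms by simp
  also have "\<dots> \<le> partial_gauge n z" using assms partial_gauge_mono[of "Suc r" n z] by simp
  finally show ?thesis .
qed

lemma marg_gauge_clique_le_partial_gauge:
  assumes "r < N" and z: "z \<in> nonneg_orthant"
  shows "marg_gauge g (Cs ! r) z \<le> partial_gauge (Suc r) z"
proof (cases "r = 0")
  case True
  then show ?thesis by (simp add: partial_gauge_Suc_0)
next
  case False
  then obtain r' where "r' < r" "s r \<in> Cs ! r'"
    using separator_in_earlier_clique[of r] assms(1) by auto
  then have "z $ s r \<le> partial_gauge r z"
    using coord_le_partial_gauge[OF _ _ _ z] assms(1) by simp
  then show ?thesis using partial_gauge_Suc[of r z] False by simp
qed

lemma two_cliques_le_gauge: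
  assumes "r < k" and "k < N" and z: "z \<in> nonneg_orthant"
  shows "marg_gauge g (Cs ! r) z + (marg_gauge g (Cs ! k) z - z $ s k) \<le> g z"
proof -
  have "marg_gauge g (Cs ! r) z \<le> partial_gauge k z"
    using marg_gauge_clique_le_partial_gauge[OF _ z, of r] partial_gauge_mono[OF _ _ z, of "Suc r" k] assms
    by simp
  then have "marg_gauge g (Cs ! r) z + (marg_gauge g (Cs ! k) z - z $ s k) \<le> partial_gauge (Suc k) z"
    using partial_gauge_Suc[of k z] assms(1) by simp
  also have "\<dots> \<le> partial_gauge N z" using partial_gauge_mono[OF _ _ z] assms(2) by simp
  finally show ?thesis using partial_gauge_N[OF z] by simp
qed

text \<open>\<open>g\<^sub>{\<^sub>v\<^sub>} (x) \<ge> x\<^sub>v\<close> holds at every vertex; at a separator \<open>s\<close> the factorisation forces equality,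
  because \<open>g \<ge> g\<^sub>C + g\<^sub>D - x\<^sub>s\<close> for an earlier clique \<open>C\<close> and the clique \<open>D\<close> that \<open>s\<close> separates.\<close>

lemma marg_gauge_separator:
  assumes k: "1 \<le> k" "k < N" and y: "y \<in> nonneg_orthant"
  shows "marg_gauge g {s k} y = y $ s k"
proof (rule antisym)
  obtain r where r: "r < k" "s k \<in> Cs ! r" using separator_in_earlier_clique[OF k] by blast
  let ?h = "\<lambda>l. marg_gauge g (Cs ! l)"
  have bdd: "bdd_below ((\<lambda>z. ?h k z - z $ s k) ` nonneg_orthant)"
    using coord_le_marg_gauge separator_in_clique[OF k] by (intro bdd_belowI2[of _ 0]) simp
  have "?h r y + (marg_gauge (?h k) (Cs ! r) y - y $ s k) =
      marg_gauge (\<lambda>z. ?h r z + (?h k z - z $ s k)) (Cs ! r) y"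
    using marg_gauge_add_dependent[OF bdd y depends_only_on_marg_gauge]
      marg_gauge_diff_coord[OF bdd_below_marg_gauge_orthant y r(2)] by simp
  also have "\<dots> \<le> marg_gauge g (Cs ! r) y"
    using two_cliques_le_gauge[OF r(1) k(2)] bdd_below_add_orthant[OF bdd_below_marg_gauge_orthant bdd]
    by (intro marg_gauge_mono[OF _ y]) simp_all
  finally have "marg_gauge (?h k) (Cs ! r) y \<le> y $ s k" by simp
  moreover have "marg_gauge g {s k} y \<le> marg_gauge (?h k) (Cs ! r) y"
    using marg_gauge_marg_gauge[OF bdd_below_gauge y] marg_gauge_subset_mono[OF bdd_below_gauge y]
      r(2) separator_in_clique[OF k] by simp
  ultimately show "marg_gauge g {s k} y \<le> y $ s k" by simp
qed (rule coord_le_marg_gauge[OF y], simp)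

lemma marg_gauge_clique_separator:
  assumes "l < N" and "u \<in> Cs ! l" and "u \<in> s ` {1..<N}" and y: "y \<in> nonneg_orthant"
  shows "marg_gauge (marg_gauge g (Cs ! l)) {u} y = y $ u"
  using assms marg_gauge_marg_gauge[OF bdd_below_gauge y, of "Cs ! l" "{u}"] marg_gauge_separator[OF _ _ y]
  by auto

context
  fixes n assumes n: "1 \<le> n" "n < N"
begin

lemma marg_partial_gauge_Suc:
  assumes y: "y \<in> nonneg_orthant"
  shows "marg_gauge (partial_gauge (Suc n)) J y =
    marg_gauge (\<lambda>z. marg_gauge (partial_gauge n) (insert (s n) J) z
      + (marg_gauge (marg_gauge g (Cs ! n)) (insert (s n) J) z - z $ s n)) J y"
proof -
  let ?K = "insert (s n) J" and ?h = "marg_gauge g (Cs ! n)"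
  have bdd_h: "bdd_below ((\<lambda>z. ?h z - z $ s n) ` nonneg_orthant)"
    using coord_le_marg_gauge separator_in_clique[OF n] by (intro bdd_belowI2[of _ 0]) simp
  have "marg_gauge (partial_gauge (Suc n)) J y = marg_gauge (marg_gauge (partial_gauge (Suc n)) ?K) J y"
    using marg_gauge_marg_gauge[OF bdd_below_partial_gauge y, of "Suc n" ?K J] n
    by (simp add: Int_absorb2 subset_insertI)
  also have "\<dots> = marg_gauge (\<lambda>z. marg_gauge (partial_gauge n) ?K z + (marg_gauge ?h ?K z - z $ s n)) J y"
  proof (rule marg_gauge_cong[OF y])
    fix z :: "real ^ 'v" assume z: "z \<in> nonneg_orthant"
    have "marg_gauge (partial_gauge (Suc n)) ?K z = marg_gauge (\<lambda>w. partial_gauge n w + (?h w - w $ s n)) ?K z"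
      by (rule marg_gauge_cong[OF z]) (simp add: partial_gauge_Suc[OF n(1)])
    also have "\<dots> = marg_gauge (partial_gauge n) ?K z + marg_gauge (\<lambda>w. ?h w - w $ s n) ?K z"
    proof (rule marg_gauge_add[OF bdd_below_partial_gauge depends_only_on_partial_gauge bdd_h _ z])
      show "depends_only_on (\<lambda>w. ?h w - w $ s n) (Cs ! n)"
        using separator_in_clique[OF n] by (auto simp: depends_only_on_def intro: depends_only_onD[OF depends_only_on_marg_gauge])
      show "clique_union Cs n \<inter> Cs ! n \<subseteq> ?K" using clique_inter_union[OF n] by auto
    qed (use n in simp_all)
    also have "marg_gauge (\<lambda>w. ?h w - w $ s n) ?K z = marg_gauge ?h ?K z - z $ s n"
      by (rule marg_gauge_diff_coord[OF bdd_below_marg_gauge_orthant z]) simp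
    finally show "marg_gauge (partial_gauge (Suc n)) ?K z =
      marg_gauge (partial_gauge n) ?K z + (marg_gauge ?h ?K z - z $ s n)" .
  qed
  finally show ?thesis .
qed

lemma marg_partial_gauge_Suc_old:
  assumes J: "J \<inter> Cs ! n \<subseteq> {s n}" and y: "y \<in> nonneg_orthant"
  shows "marg_gauge (partial_gauge (Suc n)) J y = marg_gauge (partial_gauge n) J y"
proof -
  let ?K = "insert (s n) J"
  have "marg_gauge (partial_gauge (Suc n)) J y = marg_gauge (marg_gauge (partial_gauge n) ?K) J y"
  proof (subst marg_partial_gauge_Suc[OF y], rule marg_gauge_cong[OF y])
    fix z :: "real ^ 'v" assume z: "z \<in> nonneg_orthant"
    have "marg_gauge (marg_gauge g (Cs ! n)) ?K z = marg_gauge (marg_gauge g (Cs ! n)) (?K \<inter> Cs ! n) z"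
      by (rule marg_gauge_restrict[OF bdd_below_marg_gauge_orthant z depends_only_on_marg_gauge])
    also have "?K \<inter> Cs ! n = {s n}" using J separator_in_clique[OF n] by auto
    also have "marg_gauge (marg_gauge g (Cs ! n)) {s n} z = z $ s n"
      using marg_gauge_clique_separator[OF n(2) separator_in_clique[OF n] _ z] n by simp
    finally show "marg_gauge (partial_gauge n) ?K z + (marg_gauge (marg_gauge g (Cs ! n)) ?K z - z $ s n)
        = marg_gauge (partial_gauge n) ?K z" by simp
  qed
  also have "\<dots> = marg_gauge (partial_gauge n) J y"
    using marg_gauge_marg_gauge[OF bdd_below_partial_gauge y, of n ?K J] n by (simp add: Int_absorb2 subset_insertI)
  finally show ?thesis .
qed

lemma marg_partial_gauge_Suc_new:
  assumes J: "J \<inter> clique_union Cs n \<subseteq> {s n}" and y: "y \<in> nonneg_orthant"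
    and sep: "\<And>z. z \<in> nonneg_orthant \<Longrightarrow> marg_gauge (partial_gauge n) {s n} z = z $ s n"
  shows "marg_gauge (partial_gauge (Suc n)) J y = marg_gauge g (J \<inter> Cs ! n) y"
proof -
  let ?K = "insert (s n) J"
  have "marg_gauge (partial_gauge (Suc n)) J y = marg_gauge (marg_gauge (marg_gauge g (Cs ! n)) ?K) J y"
  proof (subst marg_partial_gauge_Suc[OF y], rule marg_gauge_cong[OF y])
    fix z :: "real ^ 'v" assume z: "z \<in> nonneg_orthant"
    have "marg_gauge (partial_gauge n) ?K z = marg_gauge (partial_gauge n) (?K \<inter> clique_union Cs n) z"
      using n by (intro marg_gauge_restrict[OF bdd_below_partial_gauge z depends_only_on_partial_gauge]) simp_all
    also have "?K \<inter> clique_union Cs n = {s n}" using J clique_inter_union[OF n] by auto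
    finally show "marg_gauge (partial_gauge n) ?K z + (marg_gauge (marg_gauge g (Cs ! n)) ?K z - z $ s n)
        = marg_gauge (marg_gauge g (Cs ! n)) ?K z" using sep[OF z] by simp
  qed
  also have "\<dots> = marg_gauge g (J \<inter> Cs ! n) y"
    using marg_gauge_marg_gauge[OF bdd_below_marg_gauge_orthant y, of "Cs ! n" ?K J]
      marg_gauge_marg_gauge[OF bdd_below_gauge y, of "Cs ! n" J]
    by (simp add: Int_absorb2 subset_insertI)
  finally show ?thesis .
qed

lemma marg_partial_gauge_Suc_mixed:
  assumes i: "i \<in> Cs ! n - {s n}" and j: "j \<notin> Cs ! n" and y: "y \<in> nonneg_orthant"
  shows "marg_gauge (partial_gauge (Suc n)) {i, j} y =
    marg_gauge (\<lambda>z. marg_gauge (partial_gauge n) {s n, j} z + (marg_gauge g {i, s n} z - z $ s n)) {i, j} y"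
proof (subst marg_partial_gauge_Suc[OF y], rule marg_gauge_cong[OF y])
  fix z :: "real ^ 'v" assume z: "z \<in> nonneg_orthant"
  let ?K = "insert (s n) {i, j}" and ?V = "clique_union Cs n"
  have "i \<notin> ?V" using i clique_inter_union[OF n] by auto
  have "marg_gauge (partial_gauge n) ?K z = marg_gauge (partial_gauge n) (?K \<inter> ?V) z"
    and "marg_gauge (partial_gauge n) {s n, j} z = marg_gauge (partial_gauge n) ({s n, j} \<inter> ?V) z"
    using n by (intro marg_gauge_restrict[OF bdd_below_partial_gauge z depends_only_on_partial_gauge]; simp)+
  moreover have "?K \<inter> ?V = {s n, j} \<inter> ?V" using \<open>i \<notin> ?V\<close> by auto
  moreover have "marg_gauge (marg_gauge g (Cs ! n)) ?K z = marg_gauge (marg_gauge g (Cs ! n)) (?K \<inter> Cs ! n) z"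
    by (rule marg_gauge_restrict[OF bdd_below_marg_gauge_orthant z depends_only_on_marg_gauge])
  moreover have "?K \<inter> Cs ! n = {i, s n}" using i j separator_in_clique[OF n] by auto
  moreover have "marg_gauge (marg_gauge g (Cs ! n)) {i, s n} z = marg_gauge g {i, s n} z"
    using marg_gauge_marg_gauge[OF bdd_below_gauge z, of "Cs ! n" "{i, s n}"] i separator_in_clique[OF n]
    by (simp add: Int_absorb2)
  ultimately show "marg_gauge (partial_gauge n) ?K z + (marg_gauge (marg_gauge g (Cs ! n)) ?K z - z $ s n) =
      marg_gauge (partial_gauge n) {s n, j} z + (marg_gauge g {i, s n} z - z $ s n)" by simp
qed

lemma glued_clique_graph: "glued_clique (clique_graph Cs n) (clique_graph Cs (Suc n)) (Cs ! n) (s n)"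
proof
  show "clique_graph Cs (Suc n) a b \<longleftrightarrow> clique_graph Cs n a b \<or> (a \<noteq> b \<and> a \<in> Cs ! n \<and> b \<in> Cs ! n)"
    for a b by (rule clique_graph_Suc)
  show "a \<notin> Cs ! n - {s n} \<and> b \<notin> Cs ! n - {s n}" if "clique_graph Cs n a b" for a b
    using clique_graph_union[OF that] clique_inter_union[OF n] by auto
qed

lemma marg_partial_gauge_Suc_entering:
  assumes pairs: "\<And>i j ps y. i \<noteq> j \<Longrightarrow> is_shortest_path (clique_graph Cs n) ps i j \<Longrightarrow>
      y \<in> nonneg_orthant \<Longrightarrow> marg_gauge (partial_gauge n) {i, j} y = marg_gauge (chain_gauge g ps) {i, j} y"
    and i: "i \<in> Cs ! n - {s n}" and j: "j \<notin> Cs ! n"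
    and sp: "is_shortest_path (clique_graph Cs (Suc n)) ps i j" and y: "y \<in> nonneg_orthant"
  shows "marg_gauge (partial_gauge (Suc n)) {i, j} y = marg_gauge (chain_gauge g ps) {i, j} y"
proof -
  interpret glued_clique "clique_graph Cs n" "clique_graph Cs (Suc n)" "Cs ! n" "s n"
    by (rule glued_clique_graph)
  obtain rest where ps: "ps = i # s n # rest" and sp': "is_shortest_path (clique_graph Cs n) (s n # rest) (s n) j"
    and i_rest: "i \<notin> set (s n # rest)"
    using shortest_path_entering[OF sp i j] by blast
  have "s n \<noteq> j" using j separator_in_clique[OF n] by auto
  then have "rest \<noteq> []" using sp' by (auto simp: is_shortest_path_def is_walk_def)
  have "marg_gauge (partial_gauge (Suc n)) {i, j} y =
      marg_gauge (\<lambda>z. marg_gauge (partial_gauge n) {s n, j} z + (marg_gauge g {i, s n} z - z $ s n)) {i, j} y"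
    by (rule marg_partial_gauge_Suc_mixed[OF i j y])
  also have "\<dots> = marg_gauge (\<lambda>z. marg_gauge (chain_gauge g (s n # rest)) {s n, j} z
      + (marg_gauge g {i, s n} z - z $ s n)) {i, j} y"
    using pairs[OF \<open>s n \<noteq> j\<close> sp'] by (intro marg_gauge_cong[OF y]) simp
  also have "\<dots> = marg_gauge (chain_gauge g ps) {i, j} y"
    unfolding ps by (rule marg_chain_gauge_Cons[OF coord_le_gauge i_rest \<open>rest \<noteq> []\<close> y, symmetric])
  finally show ?thesis .
qed

lemma separator_marginal_Suc:
  assumes seps: "\<And>u y. u \<in> clique_union Cs n \<Longrightarrow> u \<in> s ` {1..<N} \<Longrightarrow> y \<in> nonneg_orthant \<Longrightarrow>
      marg_gauge (partial_gauge n) {u} y = y $ u"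
    and u: "u \<in> clique_union Cs (Suc n)" "u \<in> s ` {1..<N}" and y: "y \<in> nonneg_orthant"
  shows "marg_gauge (partial_gauge (Suc n)) {u} y = y $ u"
proof (cases "u \<in> Cs ! n - {s n}")
  case True
  have "s n \<in> clique_union Cs n" and "s n \<in> s ` {1..<N}"
    using separator_in_earlier_clique[OF n] n by (auto simp: clique_union_def)
  moreover have "{u} \<inter> clique_union Cs n \<subseteq> {s n}" using True clique_inter_union[OF n] by auto
  ultimately have "marg_gauge (partial_gauge (Suc n)) {u} y = marg_gauge g ({u} \<inter> Cs ! n) y"
    using seps by (intro marg_partial_gauge_Suc_new[OF _ y]) auto
  then show ?thesis using True u(2) marg_gauge_separator[OF _ _ y] by auto
next
  case False
  have "s n \<in> clique_union Cs n"
    using separator_in_earlier_clique[OF n] by (auto simp: clique_union_def)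
  then have "u \<in> clique_union Cs n" using u(1) False by (auto simp: clique_union_Suc)
  moreover have "{u} \<inter> Cs ! n \<subseteq> {s n}" using False by auto
  ultimately show ?thesis using marg_partial_gauge_Suc_old[OF _ y] seps u(2) y by simp
qed

lemma pair_marginal_Suc:
  assumes seps: "\<And>u y. u \<in> clique_union Cs n \<Longrightarrow> u \<in> s ` {1..<N} \<Longrightarrow> y \<in> nonneg_orthant \<Longrightarrow>
      marg_gauge (partial_gauge n) {u} y = y $ u"
    and pairs: "\<And>i j ps y. i \<noteq> j \<Longrightarrow> is_shortest_path (clique_graph Cs n) ps i j \<Longrightarrow>
      y \<in> nonneg_orthant \<Longrightarrow> marg_gauge (partial_gauge n) {i, j} y = marg_gauge (chain_gauge g ps) {i, j} y"
    and ij: "i \<noteq> j" and sp: "is_shortest_path (clique_graph Cs (Suc n)) ps i j" and y: "y \<in> nonneg_orthant"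
  shows "marg_gauge (partial_gauge (Suc n)) {i, j} y = marg_gauge (chain_gauge g ps) {i, j} y"
proof -
  interpret glued_clique "clique_graph Cs n" "clique_graph Cs (Suc n)" "Cs ! n" "s n"
    by (rule glued_clique_graph)
  consider "i \<in> Cs ! n" "j \<in> Cs ! n" | "i \<in> Cs ! n - {s n}" "j \<notin> Cs ! n"
    | "j \<in> Cs ! n - {s n}" "i \<notin> Cs ! n" | "i \<notin> Cs ! n - {s n}" "j \<notin> Cs ! n - {s n}"
    by blast
  then show ?thesis
  proof cases
    case 1
    then have "ps = [i, j]" using shortest_path_edge[OF sp ij] ij by (simp add: clique_graph_Suc)
    have "s n \<in> clique_union Cs n" and "s n \<in> s ` {1..<N}"
      using separator_in_earlier_clique[OF n] n by (auto simp: clique_union_def)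
    moreover have "{i, j} \<inter> clique_union Cs n \<subseteq> {s n}" using 1 clique_inter_union[OF n] by auto
    ultimately have "marg_gauge (partial_gauge (Suc n)) {i, j} y = marg_gauge g ({i, j} \<inter> Cs ! n) y"
      using seps by (intro marg_partial_gauge_Suc_new[OF _ y]) auto
    then show ?thesis
      using 1 \<open>ps = [i, j]\<close> marg_gauge_marg_gauge[OF bdd_below_gauge y, of "{i, j}" "{i, j}"]
      by (simp add: chain_gauge_edge Int_absorb2)
  next
    case 2
    then show ?thesis by (intro marg_partial_gauge_Suc_entering[OF pairs _ _ sp y])
  next
    case 3
    have "is_shortest_path (clique_graph Cs (Suc n)) (rev ps) j i"
      by (rule shortest_path_rev[OF sp clique_graph_sym])
    then have "marg_gauge (partial_gauge (Suc n)) {j, i} y = marg_gauge (chain_gauge g (rev ps)) {j, i} y"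
      using 3 by (intro marg_partial_gauge_Suc_entering[OF pairs _ _ _ y])
    then show ?thesis by (simp add: chain_gauge_rev insert_commute)
  next
    case 4
    then have "is_shortest_path (clique_graph Cs n) ps i j" by (rule shortest_path_avoiding[OF sp])
    moreover have "{i, j} \<inter> Cs ! n \<subseteq> {s n}" using 4 by auto
    ultimately show ?thesis using marg_partial_gauge_Suc_old[OF _ y] pairs[OF ij _ y] by simp
  qed
qed

end

lemma clique_graph_Suc_0_shortest_path:
  assumes "i \<noteq> j" and sp: "is_shortest_path (clique_graph Cs (Suc 0)) ps i j"
  shows "i \<in> Cs ! 0" and "j \<in> Cs ! 0" and "ps = [i, j]"
proof -
  have w: "is_walk (clique_graph Cs (Suc 0)) ps i j" using sp by (simp add: is_shortest_path_def)
  have wr: "is_walk (clique_graph Cs (Suc 0)) (rev ps) j i" by (rule is_walk_rev[OF w clique_graph_sym])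
  have "2 \<le> length ps" by (rule is_walk_length_ge_2[OF w \<open>i \<noteq> j\<close>])
  then have "clique_graph Cs (Suc 0) i (ps ! 1)" and "clique_graph Cs (Suc 0) j (rev ps ! 1)"
    using is_walk_nth_edge[OF w, of 0] is_walk_nth_edge[OF wr, of 0] is_walk_first[OF w] is_walk_first[OF wr]
    by simp_all
  then show "i \<in> Cs ! 0" and "j \<in> Cs ! 0" by (auto simp: clique_graph_def)
  then show "ps = [i, j]" using shortest_path_edge[OF sp \<open>i \<noteq> j\<close>] \<open>i \<noteq> j\<close> by (simp add: clique_graph_def)
qed

text \<open>The singleton claim is what the step needs: it gives \<open>x\<^sub>s\<^sub>n\<close> as the marginal of the partial sum
  at the next separator, so that the old cliques drop out of the marginals of pairs inside the new
  clique.\<close>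

lemma marg_partial_gauge:
  assumes "1 \<le> n" and "n \<le> N"
  shows "(\<forall>u y. u \<in> clique_union Cs n \<longrightarrow> u \<in> s ` {1..<N} \<longrightarrow> y \<in> nonneg_orthant \<longrightarrow>
        marg_gauge (partial_gauge n) {u} y = y $ u) \<and>
    (\<forall>i j ps y. i \<noteq> j \<longrightarrow> is_shortest_path (clique_graph Cs n) ps i j \<longrightarrow> y \<in> nonneg_orthant \<longrightarrow>
        marg_gauge (partial_gauge n) {i, j} y = marg_gauge (chain_gauge g ps) {i, j} y)"
  using assms
proof (induction n rule: nat_induct_at_least)
  case base
  have "marg_gauge (partial_gauge 1) {i, j} y = marg_gauge (chain_gauge g ps) {i, j} y"
    if "i \<noteq> j" and sp: "is_shortest_path (clique_graph Cs 1) ps i j" and y: "y \<in> nonneg_orthant" for i j ps y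
    using clique_graph_Suc_0_shortest_path[OF that(1) sp[simplified]]
      marg_gauge_marg_gauge[OF bdd_below_gauge y, of "Cs ! 0" "{i, j}"]
      marg_gauge_marg_gauge[OF bdd_below_gauge y, of "{i, j}" "{i, j}"]
    by (simp add: partial_gauge_Suc_0 chain_gauge_edge Int_absorb2)
  moreover have "marg_gauge (partial_gauge 1) {u} y = y $ u"
    if "u \<in> clique_union Cs 1" and "u \<in> s ` {1..<N}" and "y \<in> nonneg_orthant" for u y
  proof -
    have "u \<in> Cs ! 0" using that(1) by (simp add: clique_union_def lessThan_Suc)
    moreover have "0 < N" using base by linarith
    ultimately show ?thesis
      using marg_gauge_clique_separator[OF _ _ that(2,3)] by (simp add: partial_gauge_Suc_0)
  qed
  ultimately show ?case by blast
next
  case (Suc n)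
  then have n: "1 \<le> n" "n < N" by simp_all
  with Suc.IH show ?case
    using separator_marginal_Suc[OF n] pair_marginal_Suc[OF n] by simp
qed

theorem marg_gauge_pair_eq_chain:
  assumes "i \<noteq> j" and sp: "is_shortest_path (clique_graph Cs N) ps i j" and y: "y \<in> nonneg_orthant"
  shows "marg_gauge g {i, j} y = marg_gauge (chain_gauge g ps) {i, j} y"
proof -
  have w: "is_walk (clique_graph Cs N) ps i j" using sp by (simp add: is_shortest_path_def)
  then have "clique_graph Cs N (ps ! 0) (ps ! 1)"
    using is_walk_nth_edge[OF w, of 0] is_walk_length_ge_2[OF w \<open>i \<noteq> j\<close>] by simp
  then have "1 \<le> N" by (auto simp: clique_graph_def)
  have "marg_gauge g {i, j} y = marg_gauge (partial_gauge N) {i, j} y"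
    by (rule marg_gauge_cong[OF y]) (simp add: partial_gauge_N)
  also have "\<dots> = marg_gauge (chain_gauge g ps) {i, j} y"
    using marg_partial_gauge[OF \<open>1 \<le> N\<close> order_refl] assms by blast
  finally show ?thesis .
qed

end

section \<open>Block geometric extremal graphical models\<close>

lemma maximal_clique_exists:
  fixes E :: "'v::finite \<Rightarrow> 'v \<Rightarrow> bool"
  assumes "is_clique E C0"
  obtains C where "maximal_clique E C" and "C0 \<subseteq> C"
proof -
  let ?A = "{C. is_clique E C \<and> C0 \<subseteq> C}"
  have "C0 \<in> ?A" using assms by simp
  obtain m where m: "m \<in> ?A" "\<forall>C\<in>?A. m \<le> C \<longrightarrow> m = C"
    using finite_has_maximal2[OF finite \<open>C0 \<in> ?A\<close>] by blast
  have "maximal_clique E m"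
    unfolding maximal_clique_def
  proof (intro conjI allI impI)
    show "is_clique E m" using m(1) by simp
    fix C assume "is_clique E C \<and> m \<subseteq> C"
    then show "C = m" using m by auto
  qed
  with m(1) that show ?thesis by blast
qed

lemma block_graph_edge_iff:
  fixes E :: "'v::finite \<Rightarrow> 'v \<Rightarrow> bool"
  assumes "block_graph E Cs"
  shows "E = clique_graph Cs (length Cs)"
proof (intro ext iffI)
  fix a b :: 'v assume "E a b"
  moreover have "a \<noteq> b" and "E b a" using \<open>E a b\<close> assms by (auto simp: block_graph_def)
  ultimately have "is_clique E {a, b}" by (auto simp: is_clique_def)
  then obtain C where "maximal_clique E C" and "{a, b} \<subseteq> C" by (rule maximal_clique_exists)
  moreover from this have "C \<in> set Cs" using assms by (simp add: block_graph_def)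
  ultimately show "clique_graph Cs (length Cs) a b"
    using \<open>a \<noteq> b\<close> by (auto simp: clique_graph_def in_set_conv_nth)
next
  fix a b assume "clique_graph Cs (length Cs) a b"
  then obtain l where "a \<noteq> b" "l < length Cs" "a \<in> Cs ! l" "b \<in> Cs ! l" by (auto simp: clique_graph_def)
  moreover from this have "Cs ! l \<in> set Cs" by simp
  then have "maximal_clique E (Cs ! l)" using assms by (simp add: block_graph_def)
  ultimately show "E a b" by (auto simp: maximal_clique_def is_clique_def)
qed

lemma block_geometric_model_block_gauge:
  fixes g :: "real ^ 'v::finite \<Rightarrow> real"
  assumes model: "block_geometric_model E Cs g" and coord: "\<And>z v. z \<in> nonneg_orthant \<Longrightarrow> z $ v \<le> g z"
  obtains s where "block_gauge Cs s g"
proof -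
  have "\<forall>k. \<exists>v. 1 \<le> k \<and> k < length Cs \<longrightarrow> separator Cs k = {v}"
    using model by (auto simp: block_geometric_model_def block_graph_def)
  then have "\<exists>s. \<forall>k. 1 \<le> k \<and> k < length Cs \<longrightarrow> separator Cs k = {s k}" by (rule choice)
  then obtain s where s: "\<forall>k. 1 \<le> k \<and> k < length Cs \<longrightarrow> separator Cs k = {s k}" ..
  have "block_gauge Cs s g"
  proof
    fix z :: "real ^ 'v" assume "z \<in> nonneg_orthant"
    moreover have "(\<Sum>k\<in>{1..<length Cs}. \<Sum>v\<in>separator Cs k. z $ v) = (\<Sum>k\<in>{1..<length Cs}. z $ s k)"
      using s by (intro sum.cong) auto
    ultimately show "g z = (\<Sum>l<length Cs. marg_gauge g (Cs ! l) z) - (\<Sum>k\<in>{1..<length Cs}. z $ s k)"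
      using model by (simp add: block_geometric_model_def del: mem_nonneg_orthant)
  qed (use s coord in auto)
  then show ?thesis by (rule that)
qed

theorem lemma2:
  fixes M :: "'s measure"
    and X :: "'s \<Rightarrow> real ^ ('v::finite)"
    and f g :: "real ^ 'v \<Rightarrow> real"
    and E :: "'v \<Rightarrow> 'v \<Rightarrow> bool"
    and Cs :: "'v set list"
    and i j :: 'v
    and ps :: "'v list"
    and x :: "real ^ 'v"
  assumes "prob_space M"
    and "distributed M lborel X (\<lambda>y. ennreal (f y))"
    and "\<And>k. distributed M lborel (\<lambda>\<omega>. X \<omega> $ k) (exponential_density 1)"
    and "is_gauge f g"
    and "block_geometric_model E Cs g"
    and "i \<noteq> j"
    and "is_shortest_path E ps i j"
    and "0 \<le> x $ i" and "0 \<le> x $ j"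
  shows "marg_gauge g {i, j} x =
    (INF y \<in> {y. y $ i = x $ i \<and> y $ j = x $ j \<and> (\<forall>k. 0 \<le> y $ k)}.
       (\<Sum>k\<in>{1..length ps - 1}. marg_gauge g {ps ! (k - 1), ps ! k} y)
       - (\<Sum>k\<in>{1..<length ps - 1}. y $ (ps ! k)))"
proof -
  have "\<And>z v. z \<in> nonneg_orthant \<Longrightarrow> z $ v \<le> g z"
    using gauge_ge_coordinate[OF assms(1-4)] .
  then obtain s where bg: "block_gauge Cs s g"
    using block_geometric_model_block_gauge[OF assms(5)] by blast
  have "E = clique_graph Cs (length Cs)"
    using assms(5) by (intro block_graph_edge_iff) (simp add: block_geometric_model_def)
  then have sp: "is_shortest_path (clique_graph Cs (length Cs)) ps i j" using assms(7) by simp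
  \<comment> \<open>only \<open>x\<^sub>i\<close> and \<open>x\<^sub>j\<close> are assumed nonnegative, so pass to a representative in the orthant\<close>
  define x' where "x' = (\<chi> k. if k = i \<or> k = j then x $ k else 0)"
  have x': "x' \<in> nonneg_orthant" "x' $ i = x $ i" "x' $ j = x $ j"
    using assms(8,9) by (simp_all add: x'_def)
  have fibre: "orthant_fibre {i, j} x' = {y. y $ i = x $ i \<and> y $ j = x $ j \<and> (\<forall>k. 0 \<le> y $ k)}"
    using x' by (auto simp: orthant_fibre_def)
  have "marg_gauge g {i, j} x = marg_gauge g {i, j} x'"
    using x' by (intro depends_only_onD[OF depends_only_on_marg_gauge]) auto
  also have "\<dots> = marg_gauge (chain_gauge g ps) {i, j} x'"
    by (rule block_gauge.marg_gauge_pair_eq_chain[OF bg assms(6) sp x'(1)])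
  also have "\<dots> = (INF y \<in> {y. y $ i = x $ i \<and> y $ j = x $ j \<and> (\<forall>k. 0 \<le> y $ k)}. chain_gauge g ps y)"
    by (simp add: marg_gauge_eq_INF[OF x'(1)] fibre)
  finally show ?thesis by (simp add: chain_gauge_def)
qed

end
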